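(* Let $\mathcal{H}_{\rm kin}=\mathcal{H}_R\otimes\mathcal{H}_S$ be a local QRF-system partition for an $[[n,k]]$ Pauli stabilizer code, with $\mathcal{H}_R\simeq(\mathbb{C}^2)^{\otimes(n-k)}$ consisting of $n-k$ physical qubits, such that $G=\mathbb{Z}_2^{\times(n-k)}$ is represented by the code's stabilizers as $g\mapsto U^g_R\otimes U^g_S$, where $g\mapsto U^g_R$ is faithful (possibly projective), $g\mapsto U^g_S$ is non-trivial, and the orientation states satisfy $\braket{g}{h}_R=\delta_{g,h}$ ($R$ ideal). Let $\mathcal{E}=\{E_1,\ldots,E_m\}$ be a set of correctable Pauli errors. Then for every $\ket{\bar\psi}=T_R^\dagger(\ket1_R\otimes\ket\psi_S)\in\mathcal{H}_{\rm pn}$, $$T_RE_i\ket{\bar\psi}=\ket{w(E_i)}_R\otimes L_S(E_i)\ket\psi_S,$$ for some collection of orthonormal states $\ket{w(E_i)}_R\in\mathcal{H}_R$ and unitary operators $L_S(E_i)$ on $\mathcal{H}_S$ (independent of $\psi$).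
   Context: An $[[n,k]]$ Pauli stabilizer code: $\mathcal{H}_{\rm kin}=(\mathbb{C}^2)^{\otimes n}$, $\mathcal{P}_n$ the $n$-qubit Pauli group, $G=\mathbb{Z}_2^{\times(n-k)}$, $g\mapsto U^g\in\mathcal{P}_n$ a faithful unitary representation with $-I\notin U(G)$; $\mathcal{H}_{\rm pn}$ is the common $+1$ eigenspace, $\Pi_{\rm pn}=\frac1{|G|}\sum_gU^g$. Local partition: $R$ is a set of $n-k$ qubits, $S$ the remaining $k$ qubits, $U^g_R$ is the Pauli string of $U^g$ on the qubits of $R$ with prefactor removed and $U^g_S$ the remaining part (carrying the sign), so $U^g=U^g_R\otimes U^g_S$; $U^g_RU^h_R=c(g,h)U^{gh}_R$ with phases $c(g,h)$. The orientation states are $\ket g_R:=U^g_R\ket e_R$ for a seed state $\ket e_R$, forming an orthonormal basis of $\mathcal{H}_R$. Define $\ket1_R=|G|^{-1/2}\sum_g\ket g_R$ and the disentangler $T_R=\sum_{g\in G}\ket g\!\bra g_R\otimes(U^g_S)^\dagger$. A set $\{E_i\}$ is correctable if $\Pi_{\rm pn}E_i^\dagger E_j\Pi_{\rm pn}=C_{ij}\Pi_{\rm pn}$ with $(C_{ij})$ Hermitian. *)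

theory Defs
  imports Complex_Main
begin

text \<open>Qubits are natural numbers; a computational basis state of a set Q of
qubits is a subset x of Q (the qubits in state 1). A vector on Q is a function
nat set => complex vanishing outside Pow Q; an operator on Q is given by its matrix
kernel A y x = <y|A|x>, considered on Pow Q x Pow Q. Tensor products across a
partition Q = R + (Q - R) are realised by splitting basis states x = (x Int R, x - R).\<close>

datatype pauli1 = PI | PX | PY | PZ

type_synonym vec = "nat set \<Rightarrow> complex"
type_synonym op = "nat set \<Rightarrow> nat set \<Rightarrow> complex"
type_synonym pauli = "complex \<times> (nat \<Rightarrow> pauli1)"

fun pmat :: "pauli1 \<Rightarrow> bool \<Rightarrow> bool \<Rightarrow> complex" where
  "pmat PI y x = (if y = x then 1 else 0)"
| "pmat PX y x = (if y = x then 0 else 1)"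
| "pmat PY y x = (if y = x then 0 else if y then \<i> else - \<i>)"
| "pmat PZ y x = (if y = x then (if x then -1 else 1) else 0)"

definition string_op :: "nat set \<Rightarrow> (nat \<Rightarrow> pauli1) \<Rightarrow> op" where
  "string_op Q \<sigma> = (\<lambda>y x. \<Prod>q\<in>Q. pmat (\<sigma> q) (q \<in> y) (q \<in> x))"

definition pauli_op :: "nat set \<Rightarrow> pauli \<Rightarrow> op" where
  "pauli_op Q P = (\<lambda>y x. fst P * string_op Q (snd P) y x)"

definition is_pauli :: "pauli \<Rightarrow> bool" where
  "is_pauli P \<longleftrightarrow> fst P \<in> {1, -1, \<i>, - \<i>}"

definition in_space :: "nat set \<Rightarrow> vec \<Rightarrow> bool" where
  "in_space Q \<psi> \<longleftrightarrow> (\<forall>x. \<not> x \<subseteq> Q \<longrightarrow> \<psi> x = 0)"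

definition app :: "nat set \<Rightarrow> op \<Rightarrow> vec \<Rightarrow> vec" where
  "app Q A \<psi> = (\<lambda>y. if y \<subseteq> Q then (\<Sum>x\<in>Pow Q. A y x * \<psi> x) else 0)"

definition comp :: "nat set \<Rightarrow> op \<Rightarrow> op \<Rightarrow> op" where
  "comp Q A B = (\<lambda>y x. \<Sum>z\<in>Pow Q. A y z * B z x)"

definition adj :: "op \<Rightarrow> op" where
  "adj A = (\<lambda>y x. cnj (A x y))"

definition idop :: op where
  "idop = (\<lambda>y x. if y = x then 1 else 0)"

definition op_eq :: "nat set \<Rightarrow> op \<Rightarrow> op \<Rightarrow> bool" where
  "op_eq Q A B \<longleftrightarrow> (\<forall>y x. y \<subseteq> Q \<longrightarrow> x \<subseteq> Q \<longrightarrow> A y x = B y x)"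

definition inner :: "nat set \<Rightarrow> vec \<Rightarrow> vec \<Rightarrow> complex" where
  "inner Q \<phi> \<chi> = (\<Sum>x\<in>Pow Q. cnj (\<phi> x) * \<chi> x)"

definition unitary_on :: "nat set \<Rightarrow> op \<Rightarrow> bool" where
  "unitary_on Q A \<longleftrightarrow> op_eq Q (comp Q (adj A) A) idop \<and> op_eq Q (comp Q A (adj A)) idop"

definition vtensor :: "nat set \<Rightarrow> vec \<Rightarrow> vec \<Rightarrow> vec" where
  "vtensor R \<phi> \<chi> = (\<lambda>x. \<phi> (x \<inter> R) * \<chi> (x - R))"

definition otensor :: "nat set \<Rightarrow> op \<Rightarrow> op \<Rightarrow> op" where
  "otensor R A B = (\<lambda>y x. A (y \<inter> R) (x \<inter> R) * B (y - R) (x - R))"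

definition ket_bra :: "vec \<Rightarrow> vec \<Rightarrow> op" where
  "ket_bra \<phi> \<chi> = (\<lambda>y x. \<phi> y * cnj (\<chi> x))"

text \<open>The group Z_2^r as Pow {0..<r} with symmetric difference.\<close>
definition grp :: "nat \<Rightarrow> nat set set" where
  "grp r = Pow {0..<r}"

definition gmult :: "nat set \<Rightarrow> nat set \<Rightarrow> nat set" where
  "gmult g h = (g - h) \<union> (h - g)"

definition code_proj :: "nat \<Rightarrow> nat \<Rightarrow> (nat set \<Rightarrow> pauli) \<Rightarrow> op" where
  "code_proj n k U = (\<lambda>y x. (1 / of_nat (card (grp (n - k)))) *
      (\<Sum>g\<in>grp (n - k). pauli_op {0..<n} (U g) y x))"

text \<open>U^g_R: the Pauli string of U^g on R with prefactor removed;
  U^g_S: the rest, carrying the prefactor.\<close>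
definition U_R :: "nat set \<Rightarrow> (nat set \<Rightarrow> pauli) \<Rightarrow> nat set \<Rightarrow> op" where
  "U_R R U g = string_op R (snd (U g))"

definition U_S :: "nat set \<Rightarrow> nat set \<Rightarrow> (nat set \<Rightarrow> pauli) \<Rightarrow> nat set \<Rightarrow> op" where
  "U_S Q R U g = pauli_op (Q - R) (U g)"

definition orient :: "nat set \<Rightarrow> (nat set \<Rightarrow> pauli) \<Rightarrow> vec \<Rightarrow> nat set \<Rightarrow> vec" where
  "orient R U e g = app R (U_R R U g) e"

definition one_R :: "nat \<Rightarrow> nat \<Rightarrow> nat set \<Rightarrow> (nat set \<Rightarrow> pauli) \<Rightarrow> vec \<Rightarrow> vec" where
  "one_R n k R U e = (\<lambda>x. complex_of_real (1 / sqrt (real (card (grp (n - k))))) *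
      (\<Sum>g\<in>grp (n - k). orient R U e g x))"

definition disent :: "nat \<Rightarrow> nat \<Rightarrow> nat set \<Rightarrow> (nat set \<Rightarrow> pauli) \<Rightarrow> vec \<Rightarrow> op" where
  "disent n k R U e = (\<lambda>y x. \<Sum>g\<in>grp (n - k).
      otensor R (ket_bra (orient R U e g) (orient R U e g)) (adj (U_S {0..<n} R U g)) y x)"

end

theory Submission
  imports Defs
begin

text \<open>
  The state \<open>T\<^sub>R\<^sup>\<dagger> (|1\<rangle> \<otimes> |\<psi>\<rangle>)\<close> is \<open>|G|\<^sup>-\<^sup>1\<^sup>/\<^sup>2 \<Sum>\<^sub>g U\<^sup>g (|e\<rangle> \<otimes> |\<psi>\<rangle>)\<close>, which every stabilizer
  fixes. A Pauli error \<open>E\<close> commutes or anticommutes with each \<open>U\<^sup>h\<close>, so it maps this state to a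
  joint eigenvector of the stabilizers with eigenvalues \<open>\<chi>\<^sub>E(h) = \<plusminus>1\<close>, and \<open>\<chi>\<^sub>E\<close> is a character
  of \<open>G\<close>. The \<open>|G|\<close> orthonormal orientation states span the \<open>|G|\<close>-dimensional \<open>H\<^sub>R\<close>, so \<open>T\<^sub>R\<close>
  is unitary, and on a joint eigenvector it produces a product state whose \<open>R\<close>-factor
  \<open>|w(E)\<rangle> \<sim> \<Sum>\<^sub>h \<chi>\<^sub>E(h) |h\<rangle>\<close> depends on \<open>\<chi>\<^sub>E\<close> alone; distinct characters of \<open>G\<close> are orthogonal.
  The \<open>S\<close>-factor is linear in \<open>\<psi>\<close> and, as \<open>T\<^sub>R\<close>, \<open>E\<close> and the encoding are isometries, it is
  an isometry \<open>L\<^sub>S(E)\<close>, hence unitary in finite dimension.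
\<close>

section \<open>Operators on the computational basis\<close>

lemma sum_delta_left:
  assumes "finite A" "x \<in> A"
  shows "(\<Sum>y\<in>A. (if x = y then 1 else 0) * (f y :: complex)) = f x"
proof -
  have "(\<Sum>y\<in>A. (if x = y then 1 else 0) * f y) = (\<Sum>y\<in>A. if x = y then f y else 0)"
    by (rule sum.cong) auto
  then show ?thesis using assms by simp
qed

lemma sum_swap_inner_factor:
  "(\<Sum>x\<in>A. f x * (\<Sum>y\<in>B. g x y * h y)) = (\<Sum>y\<in>B. (\<Sum>x\<in>A. f x * g x y) * (h y :: complex))"
proof -
  have "(\<Sum>x\<in>A. f x * (\<Sum>y\<in>B. g x y * h y)) = (\<Sum>x\<in>A. \<Sum>y\<in>B. f x * g x y * h y)"
    by (simp add: sum_distrib_left mult.assoc)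
  also have "\<dots> = (\<Sum>y\<in>B. \<Sum>x\<in>A. f x * g x y * h y)" by (rule sum.swap)
  finally show ?thesis by (simp add: sum_distrib_right)
qed

lemma sum_product_const:
  "(\<Sum>a\<in>A. \<Sum>b\<in>B. (f a * K) * g b) = (\<Sum>a\<in>A. f a) * K * (\<Sum>b\<in>B. (g b :: complex))"
  by (subst sum_product[symmetric]) (simp add: sum_distrib_right)

lemma sum_swap_outer_pairs:
  "(\<Sum>x\<in>A. \<Sum>y\<in>B. \<Sum>j\<in>C. \<Sum>j'\<in>D. f x y j j') =
   (\<Sum>j\<in>C. \<Sum>j'\<in>D. \<Sum>x\<in>A. \<Sum>y\<in>B. (f x y j j' :: complex))"
proof -
  have "(\<Sum>x\<in>A. \<Sum>y\<in>B. \<Sum>j\<in>C. \<Sum>j'\<in>D. f x y j j') = (\<Sum>x\<in>A. \<Sum>j\<in>C. \<Sum>y\<in>B. \<Sum>j'\<in>D. f x y j j')"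
    by (rule sum.cong[OF refl], rule sum.swap)
  also have "\<dots> = (\<Sum>x\<in>A. \<Sum>j\<in>C. \<Sum>j'\<in>D. \<Sum>y\<in>B. f x y j j')"
    by (rule sum.cong[OF refl], rule sum.cong[OF refl], rule sum.swap)
  also have "\<dots> = (\<Sum>j\<in>C. \<Sum>x\<in>A. \<Sum>j'\<in>D. \<Sum>y\<in>B. f x y j j')"
    by (rule sum.swap)
  also have "\<dots> = (\<Sum>j\<in>C. \<Sum>j'\<in>D. \<Sum>x\<in>A. \<Sum>y\<in>B. f x y j j')"
    by (rule sum.cong[OF refl], rule sum.swap)
  finally show ?thesis .
qed

lemma Un_Int_Diff_split:
  assumes "a \<subseteq> R" "b \<subseteq> Q - R"
  shows "(a \<union> b) \<inter> R = a" "(a \<union> b) - R = b"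
  using assms by auto

lemma sum_Pow_split:
  assumes "finite Q" "R \<subseteq> Q"
  shows "(\<Sum>x\<in>Pow Q. f x) = (\<Sum>a\<in>Pow R. \<Sum>b\<in>Pow (Q - R). f (a \<union> b))"
proof -
  have "(\<Sum>a\<in>Pow R. \<Sum>b\<in>Pow (Q - R). f (a \<union> b)) = (\<Sum>p\<in>Pow R \<times> Pow (Q - R). f (fst p \<union> snd p))"
    by (simp add: sum.cartesian_product split_def)
  also have "\<dots> = (\<Sum>x\<in>Pow Q. f x)"
    by (rule sum.reindex_bij_witness[of _ "\<lambda>x. (x \<inter> R, x - R)" "\<lambda>p. fst p \<union> snd p"])
       (use assms in auto)
  finally show ?thesis by simp
qed

lemma op_eq_sym: "op_eq Q A B \<Longrightarrow> op_eq Q B A"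
  unfolding op_eq_def by simp

lemma op_eq_trans [trans]: "op_eq Q A B \<Longrightarrow> op_eq Q B C \<Longrightarrow> op_eq Q A C"
  unfolding op_eq_def by simp

lemma app_cong: "op_eq Q A B \<Longrightarrow> app Q A v = app Q B v"
  unfolding app_def op_eq_def by (auto intro!: sum.cong)

lemma in_space_app: "in_space Q (app Q A v)"
  unfolding in_space_def app_def by simp

lemma app_comp: "app Q A (app Q B v) = app Q (comp Q A B) v"
proof
  fix y
  have "(\<Sum>x\<in>Pow Q. A y x * app Q B v x) = (\<Sum>x\<in>Pow Q. \<Sum>z\<in>Pow Q. A y x * B x z * v z)"
    unfolding app_def by (rule sum.cong[OF refl]) (simp add: sum_distrib_left mult.assoc)
  also have "\<dots> = (\<Sum>z\<in>Pow Q. comp Q A B y z * v z)"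
    unfolding comp_def by (subst sum.swap) (simp add: sum_distrib_right)
  finally show "app Q A (app Q B v) y = app Q (comp Q A B) v y"
    unfolding app_def[of Q A "app Q B v"] app_def[of Q "comp Q A B"] by simp
qed

lemma app_scale_op: "app Q (\<lambda>y x. c * A y x) v = (\<lambda>y. c * app Q A v y)"
  unfolding app_def by (auto simp: sum_distrib_left mult_ac)

lemma app_scaled_sum:
  "app Q A (\<lambda>y. c * (\<Sum>g\<in>G. F g y)) = (\<lambda>y. c * (\<Sum>g\<in>G. app Q A (F g) y))"
proof
  fix y
  have "(\<Sum>x\<in>Pow Q. A y x * (c * (\<Sum>g\<in>G. F g x))) = c * (\<Sum>g\<in>G. \<Sum>x\<in>Pow Q. A y x * F g x)"
    by (subst sum.swap) (simp add: sum_distrib_left mult.left_commute)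
  then show "app Q A (\<lambda>y. c * (\<Sum>g\<in>G. F g y)) y = c * (\<Sum>g\<in>G. app Q A (F g) y)"
    unfolding app_def by simp
qed

lemma comp_op_assoc: "comp Q (comp Q A B) C = comp Q A (comp Q B C)"
proof (intro ext)
  fix y x
  have "(\<Sum>z\<in>Pow Q. (\<Sum>u\<in>Pow Q. A y u * B u z) * C z x) =
      (\<Sum>u\<in>Pow Q. \<Sum>z\<in>Pow Q. A y u * (B u z * C z x))"
    by (subst sum.swap) (simp add: sum_distrib_right mult.assoc)
  then show "comp Q (comp Q A B) C y x = comp Q A (comp Q B C) y x"
    unfolding comp_def by (simp add: sum_distrib_left)
qed

lemma comp_cong_left: "op_eq Q A A' \<Longrightarrow> op_eq Q (comp Q A B) (comp Q A' B)"
  unfolding op_eq_def comp_def by auto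

lemma comp_cong_right: "op_eq Q B B' \<Longrightarrow> op_eq Q (comp Q A B) (comp Q A B')"
  unfolding op_eq_def comp_def by auto

lemma comp_scale_left: "comp Q (\<lambda>y x. c * A y x) B = (\<lambda>y x. c * comp Q A B y x)"
  unfolding comp_def by (auto simp: sum_distrib_left mult_ac)

lemma comp_scale_right: "comp Q A (\<lambda>y x. c * B y x) = (\<lambda>y x. c * comp Q A B y x)"
  unfolding comp_def by (auto simp: sum_distrib_left mult_ac)

lemma idop_tensor: "idop (y \<inter> R) (x \<inter> R) * idop (y - R) (x - R) = idop y x"
proof -
  have "y \<inter> R = x \<inter> R \<and> y - R = x - R \<longleftrightarrow> y = x" by blast
  then show ?thesis unfolding idop_def by auto
qed

lemma comp_idop:
  assumes "finite Q" "y \<subseteq> Q" "x \<subseteq> Q"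
  shows "comp Q idop idop y x = idop y x"
  using assms sum_delta_left[of "Pow Q" y "\<lambda>z. idop z x"] by (simp add: comp_def idop_def)

lemma inner_app_isometry:
  assumes "finite Q" "op_eq Q (comp Q (adj A) A) idop"
  shows "inner Q (app Q A u) (app Q A v) = inner Q u v"
proof -
  have gram: "(\<Sum>y\<in>Pow Q. cnj (A y x) * A y x') = idop x x'" if "x \<in> Pow Q" "x' \<in> Pow Q" for x x'
    using assms(2) that unfolding op_eq_def comp_def adj_def by auto
  have "inner Q (app Q A u) (app Q A v) =
     (\<Sum>y\<in>Pow Q. \<Sum>x\<in>Pow Q. \<Sum>x'\<in>Pow Q. cnj (u x) * v x' * (cnj (A y x) * A y x'))"
    unfolding inner_def app_def
    by (intro sum.cong refl) (auto simp: cnj_sum sum_distrib_left sum_distrib_right mult_ac)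
  also have "\<dots> = (\<Sum>x\<in>Pow Q. \<Sum>x'\<in>Pow Q. cnj (u x) * v x' * (\<Sum>y\<in>Pow Q. cnj (A y x) * A y x'))"
    by (subst sum.swap, rule sum.cong[OF refl], subst sum.swap) (simp add: sum_distrib_left)
  also have "\<dots> = (\<Sum>x\<in>Pow Q. \<Sum>x'\<in>Pow Q. (if x = x' then 1 else 0) * (cnj (u x) * v x'))"
    by (intro sum.cong refl) (simp add: gram idop_def)
  also have "\<dots> = inner Q u v"
    unfolding inner_def using assms(1) by (intro sum.cong refl) (simp add: sum_delta_left)
  finally show ?thesis .
qed

lemma inner_vtensor:
  assumes "finite Q" "R \<subseteq> Q"
  shows "inner Q (vtensor R u v) (vtensor R u' v') = inner R u u' * inner (Q - R) v v'"
proof -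
  have "inner Q (vtensor R u v) (vtensor R u' v') =
     (\<Sum>a\<in>Pow R. \<Sum>b\<in>Pow (Q - R). cnj (u a) * u' a * (cnj (v b) * v' b))"
    unfolding inner_def vtensor_def sum_Pow_split[OF assms]
    by (intro sum.cong refl) (auto simp: Un_Int_Diff_split mult_ac)
  then show ?thesis
    unfolding inner_def sum_product by simp
qed

lemma inner_scaled_sums:
  "inner Q (\<lambda>y. c * (\<Sum>g\<in>G. F g y)) (\<lambda>y. d * (\<Sum>g\<in>G. F' g y)) =
   cnj c * d * (\<Sum>g\<in>G. \<Sum>g'\<in>G. inner Q (F g) (F' g'))"
proof -
  have "inner Q (\<lambda>y. c * (\<Sum>g\<in>G. F g y)) (\<lambda>y. d * (\<Sum>g\<in>G. F' g y)) =
     cnj c * d * (\<Sum>y\<in>Pow Q. \<Sum>g\<in>G. \<Sum>g'\<in>G. cnj (F g y) * F' g' y)"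
    unfolding inner_def by (simp add: sum_distrib_left sum_product[symmetric] mult_ac)
  also have "(\<Sum>y\<in>Pow Q. \<Sum>g\<in>G. \<Sum>g'\<in>G. cnj (F g y) * F' g' y) =
      (\<Sum>g\<in>G. \<Sum>g'\<in>G. \<Sum>y\<in>Pow Q. cnj (F g y) * F' g' y)"
    by (subst sum.swap, rule sum.cong[OF refl], rule sum.swap)
  finally show ?thesis unfolding inner_def .
qed

lemma sum_of_norm_squares_eq_0:
  fixes M :: "'a \<Rightarrow> 'a \<Rightarrow> complex"
  assumes "finite A" "(\<Sum>x\<in>A. \<Sum>y\<in>A. M x y * cnj (M x y)) = 0" "x \<in> A" "y \<in> A"
  shows "M x y = 0"
proof -
  have "complex_of_real (\<Sum>x\<in>A. \<Sum>y\<in>A. (norm (M x y))\<^sup>2) = 0"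
    using assms(2) by (simp only: of_real_sum complex_norm_square)
  then have "(\<Sum>x\<in>A. \<Sum>y\<in>A. (norm (M x y))\<^sup>2) = 0"
    by (simp only: of_real_eq_0_iff)
  then have "\<forall>x\<in>A. \<forall>y\<in>A. (norm (M x y))\<^sup>2 = 0"
    using assms(1) by (simp add: sum_nonneg sum_nonneg_eq_0_iff)
  then show ?thesis using assms(3,4) by simp
qed

lemma orthonormal_columns_imp_rows:
  fixes v :: "'j \<Rightarrow> 'a \<Rightarrow> complex"
  assumes fin: "finite A" "finite J" and card: "card J = card A"
    and orth: "\<And>j j'. j \<in> J \<Longrightarrow> j' \<in> J \<Longrightarrow>
      (\<Sum>x\<in>A. cnj (v j x) * v j' x) = (if j = j' then 1 else 0)"
    and x: "x \<in> A" and y: "y \<in> A"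
  shows "(\<Sum>j\<in>J. v j x * cnj (v j y)) = (if x = y then 1 else 0)"
proof -
  define K where "K x y = (\<Sum>j\<in>J. v j x * cnj (v j y))" for x y
  define D where "D x y = (if x = y then 1 else 0 :: complex)" for x y :: 'a
  have trace: "(\<Sum>x\<in>A. K x x) = of_nat (card J)"
    unfolding K_def using orth by (subst sum.swap) (simp add: mult.commute)
  have "(\<Sum>x\<in>A. \<Sum>y\<in>A. K x y * cnj (K x y)) =
     (\<Sum>x\<in>A. \<Sum>y\<in>A. \<Sum>j\<in>J. \<Sum>j'\<in>J. (cnj (v j' x) * v j x) * (cnj (v j y) * v j' y))"
    unfolding K_def by (simp add: sum_product mult_ac)
  also have "\<dots> = (\<Sum>j\<in>J. \<Sum>j'\<in>J. \<Sum>x\<in>A. \<Sum>y\<in>A. (cnj (v j' x) * v j x) * (cnj (v j y) * v j' y))"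
    by (rule sum_swap_outer_pairs)
  also have "\<dots> = (\<Sum>j\<in>J. \<Sum>j'\<in>J. (if j = j' then 1 else 0) * (if j = j' then 1 else 0))"
    by (intro sum.cong refl) (auto simp: orth sum_product[symmetric])
  also have "\<dots> = of_nat (card J)"
    using fin(2) by (simp add: sum_delta_left)
  finally have frobenius: "(\<Sum>x\<in>A. \<Sum>y\<in>A. K x y * cnj (K x y)) = of_nat (card J)" .
  have DD: "(\<Sum>x\<in>A. \<Sum>y\<in>A. D x y * cnj (D x y)) = of_nat (card A)"
  proof -
    have "(\<Sum>y\<in>A. D x y * cnj (D x y)) = 1" if "x \<in> A" for x
      using fin(1) that by (simp add: D_def if_distrib cong: if_cong)
    then show ?thesis by simp
  qed
  have DK: "(\<Sum>x\<in>A. \<Sum>y\<in>A. D x y * cnj (K x y)) = cnj (\<Sum>x\<in>A. K x x)"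
    using fin(1) by (simp add: D_def sum_delta_left)
  have KD: "(\<Sum>x\<in>A. \<Sum>y\<in>A. K x y * cnj (D x y)) = (\<Sum>x\<in>A. K x x)"
    using fin(1) by (simp add: D_def if_distrib cong: if_cong)
  have "(D x y - K x y) * cnj (D x y - K x y) =
      D x y * cnj (D x y) - D x y * cnj (K x y) - K x y * cnj (D x y) + K x y * cnj (K x y)" for x y
    by (simp add: algebra_simps)
  then have "(\<Sum>x\<in>A. \<Sum>y\<in>A. (D x y - K x y) * cnj (D x y - K x y)) = 0"
    using card by (simp add: sum.distrib sum_subtractf DD DK KD trace frobenius)
  from sum_of_norm_squares_eq_0[OF fin(1) this x y] have "K x y = D x y" by simp
  then show ?thesis unfolding K_def D_def by simp
qed

lemma unitary_on_if_isometric: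
  assumes "finite Q" and isometric: "\<And>\<psi> \<phi>. inner Q (app Q L \<psi>) (app Q L \<phi>) = inner Q \<psi> \<phi>"
  shows "unitary_on Q L"
proof -
  have fin: "finite (Pow Q)" using assms(1) by simp
  define basis where "basis b = (\<lambda>c. if b = c then 1 else 0 :: complex)" for b :: "nat set"
  have app_basis: "app Q L (basis b) c = L c b" if "b \<subseteq> Q" "c \<subseteq> Q" for b c
    using that sum_delta_left[OF fin, of b "L c"] by (simp add: app_def basis_def mult.commute)
  have columns: "(\<Sum>c\<in>Pow Q. cnj (L c b) * L c b') = (if b = b' then 1 else 0)"
    if "b \<in> Pow Q" "b' \<in> Pow Q" for b b'
  proof -
    have "(\<Sum>c\<in>Pow Q. cnj (L c b) * L c b') = inner Q (app Q L (basis b)) (app Q L (basis b'))"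
      unfolding inner_def using that by (intro sum.cong refl) (simp add: app_basis)
    also have "\<dots> = inner Q (basis b) (basis b')" by (rule isometric)
    also have "\<dots> = (\<Sum>c\<in>Pow Q. (if b = c then 1 else 0) * basis b' c)"
      unfolding inner_def by (intro sum.cong refl) (simp add: basis_def)
    also have "\<dots> = basis b' b" by (rule sum_delta_left[OF fin that(1)])
    also have "\<dots> = (if b = b' then 1 else 0)" unfolding basis_def by auto
    finally show ?thesis .
  qed
  have "op_eq Q (comp Q (adj L) L) idop"
    unfolding op_eq_def comp_def adj_def idop_def using columns by simp
  moreover have "op_eq Q (comp Q L (adj L)) idop"
    unfolding op_eq_def comp_def adj_def idop_def
    using orthonormal_columns_imp_rows[OF fin fin refl, of "\<lambda>b c. L c b"] columns by simp
  ultimately show ?thesis unfolding unitary_on_def ..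
qed

section \<open>Pauli operators\<close>

lemma sum_Pow_prod:
  fixes f :: "nat \<Rightarrow> bool \<Rightarrow> complex"
  assumes "finite Q"
  shows "(\<Sum>z\<in>Pow Q. \<Prod>q\<in>Q. f q (q \<in> z)) = (\<Prod>q\<in>Q. f q True + f q False)"
  using assms
proof (induction Q rule: finite_induct)
  case (insert a F)
  have disj: "Pow F \<inter> insert a ` Pow F = {}" using insert(2) by auto
  have inj: "inj_on (insert a) (Pow F)" using insert(2) by (auto intro!: inj_onI)
  have drop_a: "(\<Prod>q\<in>F. f q (q \<in> insert a z)) = (\<Prod>q\<in>F. f q (q \<in> z))" for z
  proof (intro prod.cong refl)
    fix q assume "q \<in> F"
    with insert(2) have "q \<noteq> a" by blast
    then show "f q (q \<in> insert a z) = f q (q \<in> z)" by simp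
  qed
  have "(\<Sum>z\<in>Pow (insert a F). \<Prod>q\<in>insert a F. f q (q \<in> z)) =
      (\<Sum>z\<in>Pow F. \<Prod>q\<in>insert a F. f q (q \<in> z)) + (\<Sum>z\<in>Pow F. \<Prod>q\<in>insert a F. f q (q \<in> insert a z))"
    unfolding Pow_insert using insert disj inj by (simp add: sum.union_disjoint sum.reindex)
  also have "\<dots> = (\<Sum>z\<in>Pow F. f a False * (\<Prod>q\<in>F. f q (q \<in> z))) +
      (\<Sum>z\<in>Pow F. f a True * (\<Prod>q\<in>F. f q (q \<in> z)))"
  proof (intro arg_cong2[where f = "(+)"] sum.cong refl)
    fix z assume "z \<in> Pow F"
    with insert(2) have "a \<notin> z" by blast
    then show "(\<Prod>q\<in>insert a F. f q (q \<in> z)) = f a False * (\<Prod>q\<in>F. f q (q \<in> z))"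
      using insert(1,2) by simp
    show "(\<Prod>q\<in>insert a F. f q (q \<in> insert a z)) = f a True * (\<Prod>q\<in>F. f q (q \<in> z))"
      using insert(1,2) by (simp only: prod.insert drop_a insertI1 simp_thms)
  qed
  also have "\<dots> = (f a True + f a False) * (\<Sum>z\<in>Pow F. \<Prod>q\<in>F. f q (q \<in> z))"
    by (simp add: sum_distrib_left sum.distrib algebra_simps)
  finally show ?case using insert by simp
qed simp

definition pmat_prod :: "pauli1 \<Rightarrow> pauli1 \<Rightarrow> bool \<Rightarrow> bool \<Rightarrow> complex" where
  "pmat_prod a c y x = pmat a y True * pmat c True x + pmat a y False * pmat c False x"

definition pauli1_sign :: "pauli1 \<Rightarrow> pauli1 \<Rightarrow> complex" where
  "pauli1_sign a c = (if a = PI \<or> c = PI \<or> a = c then 1 else -1)"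

definition pauli_sign :: "nat set \<Rightarrow> pauli \<Rightarrow> pauli \<Rightarrow> complex" where
  "pauli_sign Q P P' = (\<Prod>q\<in>Q. pauli1_sign (snd P q) (snd P' q))"

lemma pmat_prod_self: "pmat_prod a a y x = (if y = x then 1 else 0)"
  by (cases a; cases y; cases x) (auto simp: pmat_prod_def)

lemma pmat_prod_commute: "pmat_prod a c y x = pauli1_sign a c * pmat_prod c a y x"
  by (cases a; cases c; cases y; cases x) (auto simp: pmat_prod_def pauli1_sign_def)

lemma pmat_prod_row_nonzero: "pmat_prod a c False True \<noteq> 0 \<or> pmat_prod a c False False \<noteq> 0"
  by (cases a; cases c) (auto simp: pmat_prod_def)

lemma cnj_pmat: "cnj (pmat a y x) = pmat a x y"
  by (cases a; cases y; cases x) auto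

lemma comp_string_op:
  assumes "finite Q"
  shows "comp Q (string_op Q \<tau>) (string_op Q \<sigma>) y x = (\<Prod>q\<in>Q. pmat_prod (\<tau> q) (\<sigma> q) (q \<in> y) (q \<in> x))"
proof -
  have "comp Q (string_op Q \<tau>) (string_op Q \<sigma>) y x =
     (\<Sum>z\<in>Pow Q. \<Prod>q\<in>Q. pmat (\<tau> q) (q \<in> y) (q \<in> z) * pmat (\<sigma> q) (q \<in> z) (q \<in> x))"
    unfolding comp_def string_op_def by (simp add: prod.distrib)
  then show ?thesis
    using sum_Pow_prod[OF assms, of "\<lambda>q b. pmat (\<tau> q) (q \<in> y) b * pmat (\<sigma> q) b (q \<in> x)"]
    by (simp add: pmat_prod_def)
qed

lemma prod_indicator_eq:
  assumes "finite Q" "y \<subseteq> Q" "x \<subseteq> Q"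
  shows "(\<Prod>q\<in>Q. (if (q \<in> y) = (q \<in> x) then 1 else 0 :: complex)) = (if y = x then 1 else 0)"
proof (cases "y = x")
  case False
  then obtain q where "q \<in> Q" "(q \<in> y) \<noteq> (q \<in> x)" using assms by blast
  then have "(\<Prod>q\<in>Q. (if (q \<in> y) = (q \<in> x) then 1 else 0 :: complex)) = 0"
    using assms(1) by (subst prod_zero_iff) auto
  with False show ?thesis by simp
qed simp

lemma string_op_square:
  assumes "finite Q" "y \<subseteq> Q" "x \<subseteq> Q"
  shows "comp Q (string_op Q \<sigma>) (string_op Q \<sigma>) y x = idop y x"
  using comp_string_op[OF assms(1)] prod_indicator_eq[OF assms] by (simp add: pmat_prod_self idop_def)

lemma cnj_string_op: "cnj (string_op Q \<sigma> y x) = string_op Q \<sigma> x y"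
  unfolding string_op_def by (simp add: cnj_pmat)

lemma comp_pauli_op:
  "comp Q (pauli_op Q P) (pauli_op Q P') y x =
   fst P * fst P' * comp Q (string_op Q (snd P)) (string_op Q (snd P')) y x"
  unfolding comp_def pauli_op_def by (simp add: sum_distrib_left mult_ac)

lemma pauli_op_commute:
  assumes "finite Q"
  shows "comp Q (pauli_op Q P) (pauli_op Q P') =
    (\<lambda>y x. pauli_sign Q P P' * comp Q (pauli_op Q P') (pauli_op Q P) y x)"
  unfolding comp_pauli_op comp_string_op[OF assms] pauli_sign_def
  by (subst pmat_prod_commute) (simp add: prod.distrib mult_ac)

lemma pauli_sign_sym: "pauli_sign Q P P' = pauli_sign Q P' P"
  unfolding pauli_sign_def pauli1_sign_def by (intro prod.cong) auto

lemma pauli_sign_square: "pauli_sign Q P P' * pauli_sign Q P P' = 1"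
proof -
  have "pauli1_sign a c * pauli1_sign a c = 1" for a c by (simp add: pauli1_sign_def)
  then show ?thesis unfolding pauli_sign_def by (simp add: prod.distrib[symmetric])
qed

lemma cnj_pauli_sign: "cnj (pauli_sign Q P P') = pauli_sign Q P P'"
proof -
  have "cnj (pauli1_sign a c) = pauli1_sign a c" for a c by (simp add: pauli1_sign_def)
  then show ?thesis unfolding pauli_sign_def by simp
qed

lemma pauli_sign_cases: "pauli_sign Q P P' = 1 \<or> pauli_sign Q P P' = -1"
  using pauli_sign_square[of Q P P'] by (metis power2_eq_square square_eq_1_iff)

lemma adj_pauli_op: "adj (pauli_op Q P) y x = cnj (fst P) * string_op Q (snd P) y x"
  unfolding adj_def pauli_op_def by (simp add: cnj_string_op)

lemma pauli_op_unitary: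
  assumes "finite Q" "is_pauli P"
  shows "op_eq Q (comp Q (adj (pauli_op Q P)) (pauli_op Q P)) idop"
proof -
  have "cnj (fst P) * fst P = 1" using assms(2) unfolding is_pauli_def by auto
  then show ?thesis
    unfolding op_eq_def comp_def adj_pauli_op
    by (auto simp: pauli_op_def mult_ac sum_distrib_left[symmetric]
        string_op_square[OF assms(1), unfolded comp_def])
qed

lemma pauli_op_tensor:
  assumes "finite Q" "R \<subseteq> Q"
  shows "pauli_op Q P y x =
    string_op R (snd P) (y \<inter> R) (x \<inter> R) * pauli_op (Q - R) P (y - R) (x - R)"
proof -
  have "string_op Q (snd P) y x = string_op R (snd P) y x * string_op (Q - R) (snd P) y x"
    unfolding string_op_def using prod.subset_diff[OF assms(2,1)] by (simp add: mult.commute)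
  moreover have "string_op R (snd P) y x = string_op R (snd P) (y \<inter> R) (x \<inter> R)"
    unfolding string_op_def by (intro prod.cong) auto
  moreover have "string_op (Q - R) (snd P) y x = string_op (Q - R) (snd P) (y - R) (x - R)"
    unfolding string_op_def by (intro prod.cong) auto
  ultimately show ?thesis unfolding pauli_op_def by (simp add: mult_ac)
qed

lemma comp_pauli_op_nonzero:
  assumes "finite Q" "is_pauli P" "is_pauli P'"
  obtains x where "x \<subseteq> Q" "comp Q (pauli_op Q P) (pauli_op Q P') {} x \<noteq> 0"
proof
  define x where "x = {q \<in> Q. pmat_prod (snd P q) (snd P' q) False True \<noteq> 0}"
  show "x \<subseteq> Q" unfolding x_def by auto
  have "pmat_prod (snd P q) (snd P' q) False (q \<in> x) \<noteq> 0" if "q \<in> Q" for q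
    using that pmat_prod_row_nonzero unfolding x_def by (cases "q \<in> x") (auto simp: x_def)
  then have "(\<Prod>q\<in>Q. pmat_prod (snd P q) (snd P' q) (q \<in> {}) (q \<in> x)) \<noteq> 0"
    using assms(1) by (subst prod_zero_iff) auto
  moreover have "fst P \<noteq> 0" "fst P' \<noteq> 0" using assms(2,3) unfolding is_pauli_def by auto
  ultimately show "comp Q (pauli_op Q P) (pauli_op Q P') {} x \<noteq> 0"
    unfolding comp_pauli_op comp_string_op[OF assms(1)] by simp
qed

text \<open>Read off from the nonzero operator \<open>P E\<close>: commuting \<open>E\<close> through \<open>P = P\<^sub>1 P\<^sub>2\<close> picks up
  both signs.\<close>
lemma pauli_sign_mult:
  assumes "finite Q" "is_pauli P" "is_pauli E"
    and prod: "op_eq Q (pauli_op Q P) (comp Q (pauli_op Q P1) (pauli_op Q P2))"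
  shows "pauli_sign Q P E = pauli_sign Q P1 E * pauli_sign Q P2 E"
proof -
  let ?E = "pauli_op Q E" and ?P1 = "pauli_op Q P1" and ?P2 = "pauli_op Q P2"
  define s s1 s2 where "s = pauli_sign Q P E" and "s1 = pauli_sign Q P1 E" and "s2 = pauli_sign Q P2 E"
  define M where "M = comp Q (pauli_op Q P) ?E"
  have commute: "comp Q (pauli_op Q P') ?E = (\<lambda>y x. pauli_sign Q P' E * comp Q ?E (pauli_op Q P') y x)"
    for P' using pauli_op_commute[OF assms(1)] .
  have commute': "comp Q ?E (pauli_op Q P) = (\<lambda>y x. s * M y x)"
    unfolding M_def s_def pauli_sign_sym[of Q P E] by (rule pauli_op_commute[OF assms(1)])
  have "op_eq Q M (comp Q (comp Q ?P1 ?P2) ?E)"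
    unfolding M_def by (rule comp_cong_left[OF prod])
  also have "comp Q (comp Q ?P1 ?P2) ?E = (\<lambda>y x. s2 * (s1 * comp Q ?E (comp Q ?P1 ?P2) y x))"
    unfolding s1_def s2_def comp_op_assoc commute[of P2] comp_scale_right
    by (simp only: comp_op_assoc[symmetric] commute[of P1] comp_scale_left)
  also have "op_eq Q \<dots> (\<lambda>y x. s2 * (s1 * comp Q ?E (pauli_op Q P) y x))"
    using comp_cong_right[OF op_eq_sym[OF prod], of ?E] unfolding op_eq_def by simp
  finally have M_eq: "op_eq Q M (\<lambda>y x. s1 * s2 * s * M y x)"
    unfolding commute' by (simp add: mult_ac)
  obtain x where "x \<subseteq> Q" "M {} x \<noteq> 0"
    using comp_pauli_op_nonzero[OF assms(1-3)] unfolding M_def by blast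
  moreover from M_eq \<open>x \<subseteq> Q\<close> have "M {} x = s1 * s2 * s * M {} x"
    unfolding op_eq_def by blast
  ultimately have unit: "s1 * s2 * s = 1" by simp
  have "s = (s1 * s1) * (s2 * s2) * s"
    using pauli_sign_square[of Q P1 E] pauli_sign_square[of Q P2 E] unfolding s1_def s2_def by simp
  also have "\<dots> = s1 * s2 * (s1 * s2 * s)" by (simp add: mult_ac)
  also have "\<dots> = s1 * s2" unfolding unit by simp
  finally show ?thesis unfolding s_def s1_def s2_def .
qed

section \<open>The group \<open>\<int>\<^sub>2\<^sup>r\<close>\<close>

lemma empty_in_grp: "{} \<in> grp r"
  unfolding grp_def by simp

lemma gmult_in_grp: "g \<in> grp r \<Longrightarrow> h \<in> grp r \<Longrightarrow> gmult g h \<in> grp r"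
  unfolding grp_def gmult_def by auto

lemma gmult_cancel: "gmult h (gmult h g) = g"
  unfolding gmult_def by auto

lemma gmult_self: "gmult h h = {}"
  unfolding gmult_def by auto

lemma finite_grp: "finite (grp r)"
  unfolding grp_def by simp

lemma card_grp: "card (grp r) = 2 ^ r"
  unfolding grp_def by (simp add: card_Pow)

lemma sum_grp_translate:
  assumes "h \<in> grp r"
  shows "(\<Sum>g\<in>grp r. f (gmult h g)) = (\<Sum>g\<in>grp r. f g)"
  by (rule sum.reindex_bij_witness[of _ "gmult h" "gmult h"])
     (use assms in \<open>auto simp: gmult_cancel gmult_in_grp\<close>)

lemma sum_grp_character_eq_0:
  fixes f :: "nat set \<Rightarrow> complex"
  assumes "h0 \<in> grp r" "f h0 = -1" and mult: "\<And>h. h \<in> grp r \<Longrightarrow> f (gmult h0 h) = f h0 * f h"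
  shows "(\<Sum>h\<in>grp r. f h) = 0"
proof -
  have "(\<Sum>h\<in>grp r. f h) = (\<Sum>h\<in>grp r. f (gmult h0 h))"
    by (rule sum_grp_translate[OF assms(1), symmetric])
  also have "\<dots> = - (\<Sum>h\<in>grp r. f h)"
    using assms(2) by (simp add: mult sum_negf)
  finally show ?thesis by simp
qed

section \<open>Ideal quantum reference frames\<close>

locale ideal_qrf =
  fixes n k :: nat and U :: "nat set \<Rightarrow> pauli" and R :: "nat set" and e :: vec
  assumes U_pauli: "\<forall>g\<in>grp (n - k). is_pauli (U g)"
    and U_hom: "\<forall>g\<in>grp (n - k). \<forall>h\<in>grp (n - k).
       op_eq {0..<n} (pauli_op {0..<n} (U (gmult g h)))
         (comp {0..<n} (pauli_op {0..<n} (U g)) (pauli_op {0..<n} (U h)))"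
    and R_sub: "R \<subseteq> {0..<n}" and R_card: "card R = n - k"
    and ideal: "\<forall>g\<in>grp (n - k). \<forall>h\<in>grp (n - k).
       inner R (orient R U e g) (orient R U e h) = (if g = h then 1 else 0)"
begin

abbreviation "Q \<equiv> {0..<n}"
abbreviation "S \<equiv> {0..<n} - R"
abbreviation "G \<equiv> grp (n - k)"
abbreviation "N \<equiv> card (grp (n - k))"
abbreviation "Ustab g \<equiv> pauli_op {0..<n} (U g)"
abbreviation "UR g \<equiv> U_R R U g"
abbreviation "US g \<equiv> U_S {0..<n} R U g"
abbreviation "ket g \<equiv> orient R U e g"
abbreviation "T \<equiv> disent n k R U e"
abbreviation "\<kappa> \<equiv> complex_of_real (1 / sqrt (real (card (grp (n - k)))))"

lemma finite_R: "finite R"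
  using R_sub finite_subset by blast

lemma card_Pow_R: "card (Pow R) = N"
  using finite_R R_card by (simp add: card_Pow card_grp)

lemma kappa_square: "cnj \<kappa> * \<kappa> = 1 / of_nat N"
proof -
  have "(1 / sqrt (real N)) * (1 / sqrt (real N)) = 1 / real N"
    by (simp add: card_grp real_sqrt_mult[symmetric])
  then have "complex_of_real ((1 / sqrt (real N)) * (1 / sqrt (real N))) = of_real (1 / real N)"
    by simp
  then show ?thesis
    by (simp only: complex_cnj_complex_of_real of_real_mult of_real_divide of_real_1
        of_real_of_nat_eq complex_cnj_divide complex_cnj_one)
qed

lemma Ustab_tensor: "Ustab g y x = UR g (y \<inter> R) (x \<inter> R) * US g (y - R) (x - R)"
  unfolding U_R_def U_S_def by (rule pauli_op_tensor[OF finite_atLeastLessThan R_sub])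

lemma Ustab_empty: "op_eq Q (Ustab {}) idop"
proof -
  define c where "c = fst (U {})"
  have "c \<noteq> 0" using U_pauli empty_in_grp unfolding is_pauli_def c_def by force
  have square: "op_eq Q (comp Q (Ustab {}) (Ustab {})) (\<lambda>y x. c * c * idop y x)"
    unfolding op_eq_def comp_pauli_op c_def using string_op_square[of Q] by simp
  have idem: "op_eq Q (Ustab {}) (comp Q (Ustab {}) (Ustab {}))"
    using U_hom empty_in_grp[of "n - k"] gmult_self[of "{}"] by metis
  have scalar: "op_eq Q (Ustab {}) (\<lambda>y x. c * c * idop y x)"
    using idem square by (rule op_eq_trans)
  have "op_eq Q (Ustab {}) (comp Q (\<lambda>y x. c * c * idop y x) (\<lambda>y x. c * c * idop y x))"
    using idem comp_cong_left[OF scalar] comp_cong_right[OF scalar] op_eq_trans by blast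
  then have "Ustab {} {} {} = c * c * (c * c * comp Q idop idop {} {})"
    unfolding op_eq_def comp_scale_left comp_scale_right by simp
  moreover have "Ustab {} {} {} = c * c" using scalar unfolding op_eq_def idop_def by simp
  moreover have "comp Q idop idop {} {} = 1" using comp_idop[of Q] by (simp add: idop_def)
  ultimately have "c * c = 1" using \<open>c \<noteq> 0\<close> by simp
  then show ?thesis using scalar by simp
qed

lemma prefactor_square:
  assumes "h \<in> G"
  shows "fst (U h) * fst (U h) = 1"
proof -
  have "op_eq Q idop (comp Q (Ustab h) (Ustab h))"
    using U_hom assms Ustab_empty op_eq_sym op_eq_trans gmult_self by metis
  then have "idop {} {} = comp Q (Ustab h) (Ustab h) {} {}" unfolding op_eq_def by simp
  also have "\<dots> = fst (U h) * fst (U h)"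
    unfolding comp_pauli_op using string_op_square[of Q] by (simp add: idop_def)
  finally show ?thesis by (simp add: idop_def)
qed

lemma cnj_prefactor:
  assumes "h \<in> G"
  shows "cnj (fst (U h)) = fst (U h)"
proof -
  have "fst (U h) = 1 \<or> fst (U h) = -1"
    using prefactor_square[OF assms] by (metis power2_eq_square square_eq_1_iff)
  then show ?thesis by auto
qed

lemma cnj_US: "g \<in> G \<Longrightarrow> cnj (US g b b') = US g b' b"
  unfolding U_S_def pauli_op_def by (simp add: cnj_prefactor cnj_string_op)

lemma US_square:
  assumes "g \<in> G" "b \<subseteq> S" "b' \<subseteq> S"
  shows "(\<Sum>c\<in>Pow S. US g b c * US g c b') = idop b b'"
proof -
  have "(\<Sum>c\<in>Pow S. US g b c * US g c b') =
      fst (U g) * fst (U g) * comp S (string_op S (snd (U g))) (string_op S (snd (U g))) b b'"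
    unfolding U_S_def pauli_op_def comp_def by (simp add: sum_distrib_left mult_ac)
  then show ?thesis using assms prefactor_square[OF assms(1)] string_op_square[of S] by simp
qed

lemma in_space_ket: "in_space R (ket g)"
  unfolding orient_def by (rule in_space_app)

lemma ket_orthonormal:
  "g \<in> G \<Longrightarrow> h \<in> G \<Longrightarrow> (\<Sum>a\<in>Pow R. cnj (ket g a) * ket h a) = (if g = h then 1 else 0)"
  using ideal unfolding inner_def by blast

text \<open>There are as many orientation states as basis states of \<open>R\<close>, so they form a basis.\<close>
lemma ket_complete:
  assumes "a \<subseteq> R" "b \<subseteq> R"
  shows "(\<Sum>g\<in>G. ket g a * cnj (ket g b)) = (if a = b then 1 else 0)"
  using orthonormal_columns_imp_rows[of "Pow R" G ket a b] finite_R finite_grp card_Pow_R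
    ket_orthonormal assms by auto

lemma Ustab_app_tensor:
  "app Q (Ustab g) (vtensor R e \<psi>) = vtensor R (ket g) (app S (US g) \<psi>)"
proof
  fix y
  show "app Q (Ustab g) (vtensor R e \<psi>) y = vtensor R (ket g) (app S (US g) \<psi>) y"
  proof (cases "y \<subseteq> Q")
    case True
    have "(\<Sum>x\<in>Pow Q. Ustab g y x * vtensor R e \<psi> x) =
        (\<Sum>a\<in>Pow R. \<Sum>b\<in>Pow S. (UR g (y \<inter> R) a * e a) * (US g (y - R) b * \<psi> b))"
      unfolding sum_Pow_split[OF finite_atLeastLessThan R_sub] Ustab_tensor vtensor_def
      by (intro sum.cong refl) (auto simp: Un_Int_Diff_split mult_ac)
    also have "\<dots> = ket g (y \<inter> R) * app S (US g) \<psi> (y - R)"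
      unfolding sum_product[symmetric] orient_def app_def using True by auto
    finally show ?thesis using True unfolding app_def[of Q] vtensor_def by simp
  next
    case False
    then have "\<not> y - R \<subseteq> S" using R_sub by auto
    with False show ?thesis by (simp add: app_def vtensor_def)
  qed
qed

lemma disent_entry:
  "T y x = (\<Sum>g\<in>G. ket g (y \<inter> R) * cnj (ket g (x \<inter> R)) * US g (y - R) (x - R))"
  unfolding disent_def otensor_def ket_bra_def adj_def
  by (intro sum.cong refl) (simp add: cnj_US)

lemma adj_disent_entry:
  "adj T y x = (\<Sum>g\<in>G. cnj (ket g (x \<inter> R)) * ket g (y \<inter> R) * US g (y - R) (x - R))"
  unfolding adj_def[of T] disent_def otensor_def ket_bra_def adj_def by (simp add: mult_ac)

lemma disent_isometry: "op_eq Q (comp Q (adj T) T) idop"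
  unfolding op_eq_def
proof (intro allI impI)
  fix y x assume y: "y \<subseteq> Q" and x: "x \<subseteq> Q"
  have yS: "y - R \<subseteq> S" and xS: "x - R \<subseteq> S" using x y by auto
  let ?c = "\<lambda>g h. ket g (y \<inter> R) * cnj (ket h (x \<inter> R))"
  have "comp Q (adj T) T y x =
     (\<Sum>a\<in>Pow R. \<Sum>b\<in>Pow S. \<Sum>g\<in>G. \<Sum>h\<in>G.
        (cnj (ket g a) * ket h a * ?c g h) * (US g (y - R) b * US h b (x - R)))"
    unfolding comp_def sum_Pow_split[OF finite_atLeastLessThan R_sub] adj_disent_entry
      disent_entry sum_product
    by (intro sum.cong refl) (auto simp: Un_Int_Diff_split mult_ac)
  also have "\<dots> = (\<Sum>g\<in>G. \<Sum>h\<in>G. \<Sum>a\<in>Pow R. \<Sum>b\<in>Pow S.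
        (cnj (ket g a) * ket h a * ?c g h) * (US g (y - R) b * US h b (x - R)))"
    by (rule sum_swap_outer_pairs)
  also have "\<dots> = (\<Sum>g\<in>G. \<Sum>h\<in>G. (if g = h then 1 else 0) *
        (?c g h * (\<Sum>b\<in>Pow S. US g (y - R) b * US h b (x - R))))"
    by (intro sum.cong refl) (simp only: sum_product_const, simp add: ket_orthonormal mult.assoc)
  also have "\<dots> = (\<Sum>g\<in>G. ?c g g * idop (y - R) (x - R))"
    by (intro sum.cong refl) (simp add: sum_delta_left[OF finite_grp] US_square yS xS)
  also have "\<dots> = idop (y \<inter> R) (x \<inter> R) * idop (y - R) (x - R)"
    using ket_complete[of "y \<inter> R" "x \<inter> R"] by (simp add: sum_distrib_right[symmetric] idop_def)
  also have "\<dots> = idop y x" by (rule idop_tensor)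
  finally show "comp Q (adj T) T y x = idop y x" .
qed

lemma adj_disent_tensor:
  "app Q (adj T) (vtensor R \<phi> \<psi>) =
   (\<lambda>y. \<Sum>g\<in>G. inner R (ket g) \<phi> * vtensor R (ket g) (app S (US g) \<psi>) y)"
proof
  fix y
  show "app Q (adj T) (vtensor R \<phi> \<psi>) y =
      (\<Sum>g\<in>G. inner R (ket g) \<phi> * vtensor R (ket g) (app S (US g) \<psi>) y)"
  proof (cases "y \<subseteq> Q")
    case True
    have "app Q (adj T) (vtensor R \<phi> \<psi>) y = (\<Sum>a\<in>Pow R. \<Sum>b\<in>Pow S. \<Sum>g\<in>G.
        (cnj (ket g a) * \<phi> a * ket g (y \<inter> R)) * (US g (y - R) b * \<psi> b))"
      unfolding app_def sum_Pow_split[OF finite_atLeastLessThan R_sub] adj_disent_entry vtensor_def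
      using True by (auto simp: Un_Int_Diff_split sum_distrib_left sum_distrib_right mult_ac intro!: sum.cong)
    also have "\<dots> = (\<Sum>g\<in>G. \<Sum>a\<in>Pow R. \<Sum>b\<in>Pow S.
        (cnj (ket g a) * \<phi> a * ket g (y \<inter> R)) * (US g (y - R) b * \<psi> b))"
      by (subst sum.swap, rule sum.cong[OF refl], rule sum.swap)
    also have "\<dots> = (\<Sum>g\<in>G. inner R (ket g) \<phi> * vtensor R (ket g) (app S (US g) \<psi>) y)"
      using True unfolding inner_def vtensor_def app_def
      by (intro sum.cong refl) (simp only: sum_product_const, auto simp: mult_ac)
    finally show ?thesis .
  next
    case False
    then have "\<not> y - R \<subseteq> S" using R_sub by auto
    with False show ?thesis by (simp add: app_def vtensor_def)
  qed
qed

definition encode :: "vec \<Rightarrow> vec" where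
  "encode \<psi> = (\<lambda>y. \<kappa> * (\<Sum>g\<in>G. app Q (Ustab g) (vtensor R e \<psi>) y))"

lemma inner_ket_one:
  assumes "g \<in> G"
  shows "inner R (ket g) (one_R n k R U e) = \<kappa>"
proof -
  have "inner R (ket g) (one_R n k R U e) = \<kappa> * (\<Sum>h\<in>G. \<Sum>a\<in>Pow R. cnj (ket g a) * ket h a)"
    unfolding one_R_def inner_def by (subst sum.swap) (simp add: sum_distrib_left mult.left_commute)
  also have "\<dots> = \<kappa>"
    using assms by (simp add: ket_orthonormal finite_grp)
  finally show ?thesis .
qed

lemma adj_disent_one: "app Q (adj T) (vtensor R (one_R n k R U e) \<psi>) = encode \<psi>"
  unfolding adj_disent_tensor encode_def Ustab_app_tensor sum_distrib_left
  by (intro ext sum.cong refl) (simp add: inner_ket_one)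

lemma encode_invariant:
  assumes "h \<in> G"
  shows "app Q (Ustab h) (encode \<psi>) = encode \<psi>"
proof -
  have "app Q (Ustab h) (app Q (Ustab g) v) = app Q (Ustab (gmult h g)) v" if "g \<in> G" for g v
  proof -
    have "op_eq Q (Ustab (gmult h g)) (comp Q (Ustab h) (Ustab g))" using U_hom assms that by blast
    then show ?thesis unfolding app_comp by (rule app_cong[OF op_eq_sym])
  qed
  then have "app Q (Ustab h) (encode \<psi>) =
      (\<lambda>y. \<kappa> * (\<Sum>g\<in>G. app Q (Ustab (gmult h g)) (vtensor R e \<psi>) y))"
    unfolding encode_def app_scaled_sum by simp
  also have "\<dots> = encode \<psi>"
    unfolding encode_def
    using sum_grp_translate[OF assms, of "\<lambda>g. app Q (Ustab g) (vtensor R e \<psi>) _"] by simp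
  finally show ?thesis .
qed

lemma inner_encode: "inner Q (encode \<psi>) (encode \<phi>) = inner S \<psi> \<phi>"
proof -
  have "inner Q (app Q (Ustab g) (vtensor R e \<psi>)) (app Q (Ustab g') (vtensor R e \<phi>)) =
      (if g = g' then inner S \<psi> \<phi> else 0)" if "g \<in> G" "g' \<in> G" for g g'
  proof -
    have "inner S (app S (US g) \<psi>) (app S (US g) \<phi>) = inner S \<psi> \<phi>"
      using inner_app_isometry pauli_op_unitary U_pauli that(1) unfolding U_S_def by simp
    then show ?thesis
      unfolding Ustab_app_tensor inner_vtensor[OF finite_atLeastLessThan R_sub]
      using ideal that by auto
  qed
  then have "inner Q (encode \<psi>) (encode \<phi>) =
      cnj \<kappa> * \<kappa> * (\<Sum>g\<in>G. \<Sum>g'\<in>G. if g = g' then inner S \<psi> \<phi> else 0)"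
    unfolding encode_def inner_scaled_sums by simp
  also have "\<dots> = cnj \<kappa> * \<kappa> * of_nat N * inner S \<psi> \<phi>"
    by (simp add: finite_grp)
  finally show ?thesis using kappa_square by (simp add: card_grp)
qed

lemma pauli_sign_character:
  assumes "is_pauli E" "g \<in> G" "h \<in> G"
  shows "pauli_sign Q (U (gmult g h)) E = pauli_sign Q (U g) E * pauli_sign Q (U h) E"
  using pauli_sign_mult[of Q, OF _ _ assms(1)] U_pauli U_hom assms(2,3) gmult_in_grp by simp

lemma Ustab_app_error_encode:
  assumes "h \<in> G"
  shows "app Q (Ustab h) (app Q (pauli_op Q E) (encode \<psi>)) =
    (\<lambda>y. pauli_sign Q (U h) E * app Q (pauli_op Q E) (encode \<psi>) y)"
  unfolding app_comp pauli_op_commute[of Q "U h" E, OF finite_atLeastLessThan] app_scale_op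
  by (simp only: app_comp[symmetric] encode_invariant[OF assms])

lemma cnj_ket: "a \<subseteq> R \<Longrightarrow> cnj (ket h a) = (\<Sum>z\<in>Pow R. UR h z a * cnj (e z))"
  unfolding orient_def app_def U_R_def by (simp add: cnj_string_op)

lemma sum_ket_US_eq_app_Ustab:
  assumes "b \<subseteq> S"
  shows "(\<Sum>x\<in>Pow Q. cnj (ket h (x \<inter> R)) * US h b (x - R) * X x) =
         (\<Sum>z\<in>Pow R. cnj (e z) * app Q (Ustab h) X (z \<union> b))"
proof -
  have "(\<Sum>z\<in>Pow R. cnj (e z) * app Q (Ustab h) X (z \<union> b)) =
        (\<Sum>z\<in>Pow R. cnj (e z) * (\<Sum>x\<in>Pow Q. UR h z (x \<inter> R) * (US h b (x - R) * X x)))"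
    using assms R_sub
    by (intro sum.cong refl) (auto simp: app_def Ustab_tensor Un_Int_Diff_split mult_ac)
  also have "\<dots> = (\<Sum>x\<in>Pow Q. (\<Sum>z\<in>Pow R. cnj (e z) * UR h z (x \<inter> R)) * (US h b (x - R) * X x))"
    by (rule sum_swap_inner_factor)
  also have "\<dots> = (\<Sum>x\<in>Pow Q. cnj (ket h (x \<inter> R)) * US h b (x - R) * X x)"
    by (intro sum.cong refl) (auto simp: cnj_ket mult_ac)
  finally show ?thesis by simp
qed

lemma disent_app:
  assumes "y \<subseteq> Q"
  shows "app Q T X y =
    (\<Sum>h\<in>G. ket h (y \<inter> R) * (\<Sum>z\<in>Pow R. cnj (e z) * app Q (Ustab h) X (z \<union> (y - R))))"
proof -
  have "app Q T X y =
      (\<Sum>h\<in>G. ket h (y \<inter> R) * (\<Sum>x\<in>Pow Q. cnj (ket h (x \<inter> R)) * US h (y - R) (x - R) * X x))"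
    unfolding app_def disent_entry using assms
    by (simp add: sum_distrib_left sum_distrib_right mult_ac) (rule sum.swap)
  also have "\<dots> = (\<Sum>h\<in>G. ket h (y \<inter> R) * (\<Sum>z\<in>Pow R. cnj (e z) * app Q (Ustab h) X (z \<union> (y - R))))"
    using assms by (subst sum_ket_US_eq_app_Ustab) auto
  finally show ?thesis .
qed

lemma disent_app_eigenvector:
  assumes "in_space Q X" and eigen: "\<And>h. h \<in> G \<Longrightarrow> app Q (Ustab h) X = (\<lambda>y. \<chi> h * X y)"
  shows "app Q T X =
    vtensor R (\<lambda>a. \<Sum>h\<in>G. \<chi> h * ket h a) (\<lambda>b. \<Sum>z\<in>Pow R. cnj (e z) * X (z \<union> b))"
proof
  fix y
  show "app Q T X y = vtensor R (\<lambda>a. \<Sum>h\<in>G. \<chi> h * ket h a) (\<lambda>b. \<Sum>z\<in>Pow R. cnj (e z) * X (z \<union> b)) y"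
  proof (cases "y \<subseteq> Q")
    case True
    then show ?thesis unfolding disent_app[OF True] vtensor_def
      by (simp add: eigen sum_distrib_left sum_distrib_right mult_ac)
  next
    case False
    then have "\<not> z \<union> (y - R) \<subseteq> Q" for z using R_sub by auto
    with False assms(1) show ?thesis by (simp add: app_def vtensor_def in_space_def)
  qed
qed

definition syndrome_state :: "pauli \<Rightarrow> vec" where
  "syndrome_state E = (\<lambda>a. \<kappa> * (\<Sum>h\<in>G. pauli_sign Q (U h) E * ket h a))"

definition error_op :: "pauli \<Rightarrow> op" where
  "error_op E = (\<lambda>b b'. \<Sum>z\<in>Pow R. cnj (e z) *
     (\<Sum>x\<in>Pow Q. pauli_op Q E (z \<union> b) x * (\<Sum>g\<in>G. ket g (x \<inter> R) * US g (x - R) b')))"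

lemma encode_entry:
  assumes "x \<subseteq> Q"
  shows "encode \<psi> x = \<kappa> * (\<Sum>b\<in>Pow S. (\<Sum>g\<in>G. ket g (x \<inter> R) * US g (x - R) b) * \<psi> b)"
proof -
  have "x - R \<subseteq> S" using assms by auto
  then have "encode \<psi> x = \<kappa> * (\<Sum>g\<in>G. ket g (x \<inter> R) * (\<Sum>b\<in>Pow S. US g (x - R) b * \<psi> b))"
    unfolding encode_def Ustab_app_tensor by (simp add: vtensor_def app_def assms)
  then show ?thesis by (simp only: sum_swap_inner_factor)
qed

lemma error_op_app:
  assumes "b \<subseteq> S"
  shows "\<kappa> * app S (error_op E) \<psi> b =
    (\<Sum>z\<in>Pow R. cnj (e z) * app Q (pauli_op Q E) (encode \<psi>) (z \<union> b))"
proof -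
  let ?K = "\<lambda>x b'. \<Sum>g\<in>G. ket g (x \<inter> R) * US g (x - R) b'"
  have "app Q (pauli_op Q E) (encode \<psi>) (z \<union> b) =
      \<kappa> * (\<Sum>b'\<in>Pow S. (\<Sum>x\<in>Pow Q. pauli_op Q E (z \<union> b) x * ?K x b') * \<psi> b')" if "z \<subseteq> R" for z
  proof -
    have "z \<union> b \<subseteq> Q" using that assms R_sub by auto
    then have "app Q (pauli_op Q E) (encode \<psi>) (z \<union> b) =
        \<kappa> * (\<Sum>x\<in>Pow Q. pauli_op Q E (z \<union> b) x * (\<Sum>b'\<in>Pow S. ?K x b' * \<psi> b'))"
      unfolding app_def by (simp add: encode_entry sum_distrib_left mult.left_commute)
    then show ?thesis by (simp only: sum_swap_inner_factor)
  qed
  then have "(\<Sum>z\<in>Pow R. cnj (e z) * app Q (pauli_op Q E) (encode \<psi>) (z \<union> b)) =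
      \<kappa> * (\<Sum>z\<in>Pow R. cnj (e z) * (\<Sum>b'\<in>Pow S. (\<Sum>x\<in>Pow Q. pauli_op Q E (z \<union> b) x * ?K x b') * \<psi> b'))"
    by (simp add: sum_distrib_left mult.left_commute)
  also have "\<dots> = \<kappa> * app S (error_op E) \<psi> b"
    unfolding error_op_def app_def using assms by (simp only: sum_swap_inner_factor) simp
  finally show ?thesis ..
qed

lemma disent_error_encode:
  "app Q T (app Q (pauli_op Q E) (encode \<psi>)) = vtensor R (syndrome_state E) (app S (error_op E) \<psi>)"
proof
  fix y
  have eigen: "app Q T (app Q (pauli_op Q E) (encode \<psi>)) =
    vtensor R (\<lambda>a. \<Sum>h\<in>G. pauli_sign Q (U h) E * ket h a)
      (\<lambda>b. \<Sum>z\<in>Pow R. cnj (e z) * app Q (pauli_op Q E) (encode \<psi>) (z \<union> b))"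
    by (rule disent_app_eigenvector[OF in_space_app Ustab_app_error_encode])
  show "app Q T (app Q (pauli_op Q E) (encode \<psi>)) y = vtensor R (syndrome_state E) (app S (error_op E) \<psi>) y"
  proof (cases "y - R \<subseteq> S")
    case True
    then show ?thesis
      unfolding eigen vtensor_def syndrome_state_def error_op_app[OF True, symmetric] by simp
  next
    case False
    then have "\<not> y \<subseteq> Q" by auto
    with False show ?thesis by (simp add: app_def vtensor_def)
  qed
qed

lemma in_space_syndrome_state: "in_space R (syndrome_state E)"
  using in_space_ket unfolding in_space_def syndrome_state_def by simp

lemma inner_syndrome_state:
  "inner R (syndrome_state E) (syndrome_state E') =
   cnj \<kappa> * \<kappa> * (\<Sum>h\<in>G. pauli_sign Q (U h) E * pauli_sign Q (U h) E')"
proof -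
  have "inner R (\<lambda>a. pauli_sign Q (U h) E * ket h a) (\<lambda>a. pauli_sign Q (U h') E' * ket h' a) =
      (if h = h' then pauli_sign Q (U h) E * pauli_sign Q (U h) E' else 0)"
    if "h \<in> G" "h' \<in> G" for h h'
  proof -
    have "inner R (\<lambda>a. pauli_sign Q (U h) E * ket h a) (\<lambda>a. pauli_sign Q (U h') E' * ket h' a) =
        pauli_sign Q (U h) E * pauli_sign Q (U h') E' * inner R (ket h) (ket h')"
      unfolding inner_def by (simp add: sum_distrib_left mult_ac cnj_pauli_sign)
    then show ?thesis using ideal that by simp
  qed
  then show ?thesis
    unfolding syndrome_state_def inner_scaled_sums by (simp add: finite_grp)
qed

lemma syndrome_state_normalized: "inner R (syndrome_state E) (syndrome_state E) = 1"
  unfolding inner_syndrome_state using kappa_square by (simp add: pauli_sign_square card_grp)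

lemma syndrome_states_orthogonal:
  assumes "is_pauli E" "is_pauli E'" "syndrome_state E \<noteq> syndrome_state E'"
  shows "inner R (syndrome_state E) (syndrome_state E') = 0"
proof -
  define f where "f h = pauli_sign Q (U h) E * pauli_sign Q (U h) E'" for h
  obtain h0 where h0: "h0 \<in> G" "pauli_sign Q (U h0) E \<noteq> pauli_sign Q (U h0) E'"
    using assms(3) unfolding syndrome_state_def by force
  then have "f h0 = -1"
    using pauli_sign_cases[of Q "U h0" E] pauli_sign_cases[of Q "U h0" E'] unfolding f_def by auto
  moreover have "f (gmult h0 h) = f h0 * f h" if "h \<in> G" for h
    unfolding f_def using pauli_sign_character[OF assms(1) h0(1) that]
      pauli_sign_character[OF assms(2) h0(1) that] by (simp add: mult_ac)
  ultimately have "(\<Sum>h\<in>G. f h) = 0" by (rule sum_grp_character_eq_0[OF h0(1)])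
  then show ?thesis unfolding inner_syndrome_state f_def by simp
qed

lemma error_op_unitary:
  assumes "is_pauli E"
  shows "unitary_on S (error_op E)"
proof (rule unitary_on_if_isometric)
  fix \<psi> \<phi>
  let ?EX = "\<lambda>\<psi>. app Q (pauli_op Q E) (encode \<psi>)"
  have "inner S (app S (error_op E) \<psi>) (app S (error_op E) \<phi>) =
      inner R (syndrome_state E) (syndrome_state E) * inner S (app S (error_op E) \<psi>) (app S (error_op E) \<phi>)"
    by (simp add: syndrome_state_normalized)
  also have "\<dots> = inner Q (app Q T (?EX \<psi>)) (app Q T (?EX \<phi>))"
    unfolding disent_error_encode inner_vtensor[OF finite_atLeastLessThan R_sub] ..
  also have "\<dots> = inner Q (?EX \<psi>) (?EX \<phi>)"
    by (rule inner_app_isometry[OF finite_atLeastLessThan disent_isometry])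
  also have "\<dots> = inner Q (encode \<psi>) (encode \<phi>)"
    by (rule inner_app_isometry[OF finite_atLeastLessThan pauli_op_unitary[OF finite_atLeastLessThan assms]])
  also have "\<dots> = inner S \<psi> \<phi>" by (rule inner_encode)
  finally show "inner S (app S (error_op E) \<psi>) (app S (error_op E) \<phi>) = inner S \<psi> \<phi>" .
qed simp

end

theorem mainTheorem9:
  fixes n k m :: nat and U :: "nat set \<Rightarrow> pauli" and R :: "nat set" and e :: vec
    and E :: "nat \<Rightarrow> pauli"
  assumes kn: "k \<le> n"
    and U_pauli: "\<forall>g\<in>grp (n - k). is_pauli (U g)"
    and U_hom: "\<forall>g\<in>grp (n - k). \<forall>h\<in>grp (n - k).
       op_eq {0..<n} (pauli_op {0..<n} (U (gmult g h)))
         (comp {0..<n} (pauli_op {0..<n} (U g)) (pauli_op {0..<n} (U h)))"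
    and U_faithful: "\<forall>g\<in>grp (n - k). \<forall>h\<in>grp (n - k).
       op_eq {0..<n} (pauli_op {0..<n} (U g)) (pauli_op {0..<n} (U h)) \<longrightarrow> g = h"
    and U_no_minus: "\<forall>g\<in>grp (n - k). \<not> op_eq {0..<n} (pauli_op {0..<n} (U g)) (\<lambda>y x. - idop y x)"
    and R_sub: "R \<subseteq> {0..<n}" and R_card: "card R = n - k"
    and UR_faithful: "\<forall>g\<in>grp (n - k). \<forall>h\<in>grp (n - k).
       op_eq R (U_R R U g) (U_R R U h) \<longrightarrow> g = h"
    and US_nontrivial: "\<exists>g\<in>grp (n - k). \<not> op_eq ({0..<n} - R) (U_S {0..<n} R U g) idop"
    and e_space: "in_space R e"
    and ideal: "\<forall>g\<in>grp (n - k). \<forall>h\<in>grp (n - k).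
       inner R (orient R U e g) (orient R U e h) = (if g = h then 1 else 0)"
    and E_pauli: "\<forall>i<m. is_pauli (E i)"
    and correctable: "\<exists>C :: nat \<Rightarrow> nat \<Rightarrow> complex.
       (\<forall>i<m. \<forall>j<m. C j i = cnj (C i j)) \<and>
       (\<forall>i<m. \<forall>j<m. op_eq {0..<n}
          (comp {0..<n} (code_proj n k U)
             (comp {0..<n} (adj (pauli_op {0..<n} (E i)))
                (comp {0..<n} (pauli_op {0..<n} (E j)) (code_proj n k U))))
          (\<lambda>y x. C i j * code_proj n k U y x))"
  shows "\<exists>(w :: nat \<Rightarrow> vec) (L :: nat \<Rightarrow> op).
     (\<forall>i<m. in_space R (w i) \<and> inner R (w i) (w i) = 1) \<and>
     (\<forall>i<m. \<forall>j<m. w i \<noteq> w j \<longrightarrow> inner R (w i) (w j) = 0) \<and>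
     (\<forall>i<m. unitary_on ({0..<n} - R) (L i)) \<and>
     (\<forall>\<psi>. in_space ({0..<n} - R) \<psi> \<longrightarrow>
        (\<forall>i<m. app {0..<n} (disent n k R U e)
                 (app {0..<n} (pauli_op {0..<n} (E i))
                    (app {0..<n} (adj (disent n k R U e)) (vtensor R (one_R n k R U e) \<psi>)))
               = vtensor R (w i) (app ({0..<n} - R) (L i) \<psi>)))"
proof -
  interpret ideal_qrf n k U R e
    using U_pauli U_hom R_sub R_card ideal by unfold_locales
  have "app {0..<n} (disent n k R U e) (app {0..<n} (pauli_op {0..<n} (E i))
      (app {0..<n} (adj (disent n k R U e)) (vtensor R (one_R n k R U e) \<psi>))) =
    vtensor R (syndrome_state (E i)) (app ({0..<n} - R) (error_op (E i)) \<psi>)" for i \<psi>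
    unfolding adj_disent_one by (rule disent_error_encode)
  then show ?thesis
    using in_space_syndrome_state syndrome_state_normalized syndrome_states_orthogonal
      error_op_unitary E_pauli
    by (intro exI[of _ "\<lambda>i. syndrome_state (E i)"] exI[of _ "\<lambda>i. error_op (E i)"]) auto
qed

end
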